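(* Fix a prime $p$ and let $\mathbb{L}_p(r)=|r|+\|r\|_p$ on $\mathbb{Z}[\tfrac1p]$. Then $\mathbb{Z}[\tfrac1p]$ has the property of bounded $p$-dilation with respect to $\mathbb{L}_p$. In particular, $\mathbb{L}_p$ is of bounded doubling with constant $C_{\mathbb{L}_p}=4p^8$, i.e. $|B_{\mathbb{L}_p}(2R)|\le 4p^8\,|B_{\mathbb{L}_p}(R)|$ for all $R\ge 1$.
   Context: $\mathbb{Z}[\tfrac1p]=\{a/p^k: a\in\mathbb{Z},k\in\mathbb{N}\}$ as an additive discrete group; $|r|$ is the absolute value and $\|\cdot\|_p$ is the $p$-adic norm ($\|0\|_p=0$, $\|r\|_p=p^{-n}$ if $r=ap^n/b$ with $a,b$ coprime to $p$ and to each other). For a length function $\mathbb{L}$ on a discrete group $\Gamma$, $B_{\mathbb{L}}(R)=\{\gamma:\mathbb{L}(\gamma)\le R\}$. $\mathbb{L}$ is proper if all $B_{\mathbb{L}}(R)$ are finite. $\Gamma$ has bounded ${\bf t}$-dilation ($\mathbf t>1$) with respect to $\mathbb{L}$ if $\mathbb{L}$ is proper and there is $K<\infty$ with $|B_{\mathbb{L}}(\mathbf tR)|\le K|B_{\mathbb{L}}(R)|$ for all $R\ge1$. $\mathbb{L}$ is of bounded doubling with constant $C$ if $\mathbb{L}$ is proper and $|B_{\mathbb{L}}(2R)|\le C|B_{\mathbb{L}}(R)|$ for all $R\ge1$. *)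

theory Defs
  imports "HOL-Computational_Algebra.Computational_Algebra"
begin

definition Zinvp :: "nat \<Rightarrow> rat set" where
  "Zinvp p = {of_int a / of_nat p ^ k | a k. True}"

definition padic_norm :: "nat \<Rightarrow> rat \<Rightarrow> real" where
  "padic_norm p r = (if r = 0 then 0 else
     (let (a, b) = quotient_of r in
      real p powi (int (multiplicity (int p) b) - int (multiplicity (int p) a))))"

definition Lp :: "nat \<Rightarrow> rat \<Rightarrow> real" where
  "Lp p r = real_of_rat \<bar>r\<bar> + padic_norm p r"

definition ball_L :: "'a set \<Rightarrow> ('a \<Rightarrow> real) \<Rightarrow> real \<Rightarrow> 'a set" where
  "ball_L G L R = {g \<in> G. L g \<le> R}"

definition proper_L :: "'a set \<Rightarrow> ('a \<Rightarrow> real) \<Rightarrow> bool" where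
  "proper_L G L \<longleftrightarrow> (\<forall>R. finite (ball_L G L R))"

definition bounded_dilation :: "'a set \<Rightarrow> ('a \<Rightarrow> real) \<Rightarrow> real \<Rightarrow> bool" where
  "bounded_dilation G L t \<longleftrightarrow> proper_L G L \<and>
     (\<exists>K::real. \<forall>R\<ge>1. real (card (ball_L G L (t * R))) \<le> K * real (card (ball_L G L R)))"

definition bounded_doubling :: "'a set \<Rightarrow> ('a \<Rightarrow> real) \<Rightarrow> real \<Rightarrow> bool" where
  "bounded_doubling G L C \<longleftrightarrow> proper_L G L \<and>
     (\<forall>R\<ge>1. real (card (ball_L G L (2 * R))) \<le> C * real (card (ball_L G L R)))"

end

theory Submission
  imports Defs
begin

(* A nonzero element of Z[1/p] whose reduced denominator is p^m with m > 0 has p-adic norm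
   exactly p^m. Hence L_p(r) <= R < p^(K+1) forces r into the lattice p^(-K) Z, and the ball of
   radius R has at most 2 R p^K + 1 elements. Conversely, the p-adic norm of j / p^k is at most
   p^k, so for p^k <= R/2 the ball of radius R contains every j / p^k with |j / p^k| <= R/2, i.e.
   at least R p^k / 2 elements. If p^(k+2) <= 2R < p^(k+3), the two bounds give
   |B(2R)| <= 10 p^2 |B(R)|; if 2R < p^2, already |B(2R)| <= 2 p^3 + 1. Bounded dilation by any
   factor follows from bounded doubling by iteration. *)

subsection \<open>Doubling implies dilation\<close>

lemma ball_L_mono: "R \<le> S \<Longrightarrow> ball_L G L R \<subseteq> ball_L G L S"
  unfolding ball_L_def by auto

lemma card_ball_L_mono:
  assumes "proper_L G L" "R \<le> S"
  shows "card (ball_L G L R) \<le> card (ball_L G L S)"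
  using assms by (intro card_mono ball_L_mono) (auto simp: proper_L_def)

lemma bounded_doubling_power:
  assumes doubling: "bounded_doubling G L C" and "0 \<le> C" "1 \<le> R"
  shows "real (card (ball_L G L (2 ^ n * R))) \<le> C ^ n * real (card (ball_L G L R))"
proof (induction n)
  case (Suc n)
  have "(1::real) \<le> 2 ^ n"
    by simp
  then have "1 \<le> 2 ^ n * R"
    using mult_mono[of 1 "2 ^ n" 1 R] \<open>1 \<le> R\<close> by simp
  then have "real (card (ball_L G L (2 * (2 ^ n * R)))) \<le> C * real (card (ball_L G L (2 ^ n * R)))"
    using doubling by (simp add: bounded_doubling_def)
  also have "\<dots> \<le> C * (C ^ n * real (card (ball_L G L R)))"
    using Suc.IH \<open>0 \<le> C\<close> by (rule mult_left_mono)
  finally show ?case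
    by (simp add: mult.assoc)
qed simp

lemma bounded_doubling_imp_bounded_dilation:
  assumes doubling: "bounded_doubling G L C" and "0 \<le> C"
  shows "bounded_dilation G L t"
proof -
  have proper: "proper_L G L"
    using doubling by (simp add: bounded_doubling_def)
  obtain n where "t < 2 ^ n"
    using real_arch_pow[of 2 t] by auto
  have "real (card (ball_L G L (t * R))) \<le> C ^ n * real (card (ball_L G L R))" if "1 \<le> R" for R
  proof -
    have "t * R \<le> 2 ^ n * R"
      using \<open>t < 2 ^ n\<close> that by (intro mult_right_mono) auto
    then have "real (card (ball_L G L (t * R))) \<le> real (card (ball_L G L (2 ^ n * R)))"
      using card_ball_L_mono[OF proper] by simp
    also have "\<dots> \<le> C ^ n * real (card (ball_L G L R))"
      using bounded_doubling_power[OF doubling \<open>0 \<le> C\<close> that] .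
    finally show ?thesis .
  qed
  then show ?thesis
    using proper unfolding bounded_dilation_def by blast
qed

subsection \<open>Reduced fractions in Z[1/p]\<close>

lemma quotient_of_Zinvp:
  assumes "prime p" and q: "quotient_of (of_int j / of_nat p ^ k) = (a, b)"
  obtains m where "b = int p ^ m" "m \<le> k"
proof -
  have "0 < b" "coprime a b"
    using quotient_of_denom_pos[OF q] quotient_of_coprime[OF q] by auto
  have "of_int j / of_nat p ^ k = (of_int a / of_int b :: rat)"
    using quotient_of_div[OF q] .
  then have "of_int (a * int p ^ k) = (of_int (j * b) :: rat)"
    using \<open>0 < b\<close> \<open>prime p\<close> by (simp add: field_simps prime_gt_0_nat)
  then have "b dvd a * int p ^ k"
    by (metis dvd_triv_right of_int_eq_iff)
  then have "b dvd int p ^ k"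
    using \<open>coprime a b\<close> by (metis coprime_commute coprime_dvd_mult_right_iff)
  then obtain m where "m \<le> k" "normalize b = int p ^ m"
    using divides_primepow[of "int p"] \<open>prime p\<close> by auto
  then show thesis
    using that \<open>0 < b\<close> by simp
qed

lemma padic_norm_reduced_fraction:
  assumes "prime p" "r \<noteq> 0" "quotient_of r = (a, int p ^ m)"
  shows "padic_norm p r = real p powi (int m - int (multiplicity (int p) a))"
proof -
  have "multiplicity (int p) (int p ^ m) = m"
    using \<open>prime p\<close> by (simp add: multiplicity_same_power prime_gt_0_int not_prime_unit)
  then show ?thesis
    using assms by (simp add: padic_norm_def)
qed

lemma padic_norm_le_denominator:
  assumes "prime p" "quotient_of r = (a, int p ^ m)"
  shows "padic_norm p r \<le> real p ^ m"
proof (cases "r = 0")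
  case False
  have "real p powi (int m - int (multiplicity (int p) a)) \<le> real p powi int m"
    using \<open>prime p\<close> by (intro power_int_increasing) (auto simp: prime_gt_0_nat Suc_leI)
  then show ?thesis
    using padic_norm_reduced_fraction[OF assms(1) False assms(2)] by simp
qed (simp add: padic_norm_def)

lemma padic_norm_eq_denominator:
  assumes "prime p" "0 < m" "quotient_of r = (a, int p ^ m)"
  shows "padic_norm p r = real p ^ m"
proof -
  have "coprime a (int p ^ m)"
    using quotient_of_coprime[OF assms(3)] .
  then have "\<not> int p dvd a"
    using assms(1,2) by (metis coprime_common_divisor dvd_power not_prime_unit prime_nat_int_transfer)
  then have "multiplicity (int p) a = 0"
    by (rule not_dvd_imp_multiplicity_0)
  moreover have "r \<noteq> 0"
    using assms(2,3) \<open>prime p\<close> by (auto simp: prime_gt_1_nat)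
  ultimately show ?thesis
    using padic_norm_reduced_fraction[OF assms(1) _ assms(3)] by simp
qed

lemma padic_norm_Zinvp_le:
  assumes "prime p"
  shows "padic_norm p (of_int j / of_nat p ^ k) \<le> real p ^ k"
proof -
  obtain a b where q: "quotient_of (of_int j / of_nat p ^ k) = (a, b)"
    by fastforce
  then obtain m where "b = int p ^ m" "m \<le> k"
    using quotient_of_Zinvp[OF assms] by blast
  then have "padic_norm p (of_int j / of_nat p ^ k) \<le> real p ^ m"
    using padic_norm_le_denominator[OF assms] q by blast
  also have "\<dots> \<le> real p ^ k"
    using \<open>m \<le> k\<close> assms by (intro power_increasing) (auto simp: prime_gt_0_nat Suc_leI)
  finally show ?thesis .
qed

lemma Zinvp_lattice_point_if_padic_norm_less:
  assumes "prime p" "r \<in> Zinvp p" "padic_norm p r < real p ^ Suc K"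
  shows "\<exists>j. r = of_int j / of_nat p ^ K"
proof -
  obtain j k where r: "r = of_int j / of_nat p ^ k"
    using \<open>r \<in> Zinvp p\<close> by (auto simp: Zinvp_def)
  obtain a b where q: "quotient_of r = (a, b)"
    by fastforce
  then obtain m where b: "b = int p ^ m"
    using quotient_of_Zinvp[OF \<open>prime p\<close>] r by blast
  have "m \<le> K"
  proof (cases "m = 0")
    case False
    then have "real p ^ m < real p ^ Suc K"
      using padic_norm_eq_denominator[OF \<open>prime p\<close>] q b assms(3) by simp
    moreover have "1 < real p"
      using prime_gt_1_nat[OF \<open>prime p\<close>] by simp
    ultimately have "m < Suc K"
      by (simp only: power_strict_increasing_iff)
    then show ?thesis
      by simp
  qed simp
  have "r = of_int a / of_nat p ^ m"
    using quotient_of_div[OF q] b by simp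
  also have "\<dots> = of_int (a * int p ^ (K - m)) / (of_nat p ^ m * of_nat p ^ (K - m))"
    using \<open>prime p\<close> by (simp add: prime_gt_0_nat)
  also have "\<dots> = of_int (a * int p ^ (K - m)) / of_nat p ^ K"
    using \<open>m \<le> K\<close> by (simp flip: power_add)
  finally show ?thesis ..
qed

subsection \<open>Balls of \<open>Lp\<close> versus segments of lattices\<close>

abbreviation Lp_ball :: "nat \<Rightarrow> real \<Rightarrow> rat set" where
  "Lp_ball p R \<equiv> ball_L (Zinvp p) (Lp p) R"

definition lattice_segment :: "nat \<Rightarrow> nat \<Rightarrow> int \<Rightarrow> rat set" where
  "lattice_segment p k N = (\<lambda>j. of_int j / of_nat p ^ k) ` {-N..N}"

lemma card_lattice_segment:
  assumes "0 < p" "0 \<le> N"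
  shows "real (card (lattice_segment p k N)) = 2 * of_int N + 1"
proof -
  have "inj_on (\<lambda>j. of_int j / of_nat p ^ k :: rat) {-N..N}"
    using \<open>0 < p\<close> by (auto simp: inj_on_def)
  then show ?thesis
    using \<open>0 \<le> N\<close> by (simp add: lattice_segment_def card_image)
qed

lemma of_rat_abs_lattice_point:
  "real_of_rat \<bar>of_int j / of_nat p ^ k\<bar> = \<bar>of_int j\<bar> / real p ^ k"
  by (simp add: of_rat_divide of_rat_power flip: of_int_abs)

lemma Lp_ball_subset_lattice_segment:
  assumes "prime p" "R < real p ^ Suc K"
  shows "Lp_ball p R \<subseteq> lattice_segment p K \<lfloor>R * real p ^ K\<rfloor>"
proof
  fix r
  assume "r \<in> Lp_ball p R"
  then have "r \<in> Zinvp p" and L: "real_of_rat \<bar>r\<bar> + padic_norm p r \<le> R"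
    by (auto simp: ball_L_def Lp_def)
  moreover have "0 \<le> padic_norm p r" "0 \<le> real_of_rat \<bar>r\<bar>"
    by (auto simp: padic_norm_def split: prod.split)
  ultimately have "padic_norm p r < real p ^ Suc K"
    using assms(2) by linarith
  then obtain j where r: "r = of_int j / of_nat p ^ K"
    using Zinvp_lattice_point_if_padic_norm_less[OF \<open>prime p\<close> \<open>r \<in> Zinvp p\<close>] by blast
  have "\<bar>of_int j\<bar> / real p ^ K \<le> R"
    using L \<open>0 \<le> padic_norm p r\<close> unfolding r of_rat_abs_lattice_point by linarith
  then have "\<bar>j\<bar> \<le> \<lfloor>R * real p ^ K\<rfloor>"
    using \<open>prime p\<close> by (simp add: le_floor_iff divide_le_eq prime_gt_0_nat)
  then show "r \<in> lattice_segment p K \<lfloor>R * real p ^ K\<rfloor>"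
    unfolding lattice_segment_def r by (intro imageI) (simp add: abs_le_iff)
qed

lemma lattice_segment_subset_Lp_ball:
  assumes "prime p" "real p ^ k \<le> R / 2"
  shows "lattice_segment p k \<lfloor>real p ^ k * R / 2\<rfloor> \<subseteq> Lp_ball p R"
proof
  fix r
  assume "r \<in> lattice_segment p k \<lfloor>real p ^ k * R / 2\<rfloor>"
  then obtain j where r: "r = of_int j / of_nat p ^ k"
    and "j \<in> {-\<lfloor>real p ^ k * R / 2\<rfloor>..\<lfloor>real p ^ k * R / 2\<rfloor>}"
    unfolding lattice_segment_def by blast
  then have "\<bar>j\<bar> \<le> \<lfloor>real p ^ k * R / 2\<rfloor>"
    by auto
  then have "\<bar>of_int j\<bar> / real p ^ k \<le> R / 2"
    using \<open>prime p\<close> by (simp add: le_floor_iff divide_le_eq prime_gt_0_nat mult.commute)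
  then have "real_of_rat \<bar>r\<bar> \<le> R / 2"
    unfolding r of_rat_abs_lattice_point .
  moreover have "padic_norm p r \<le> R / 2"
    using padic_norm_Zinvp_le[OF \<open>prime p\<close>] assms(2) r by (meson order_trans)
  moreover have "r \<in> Zinvp p"
    using r by (auto simp: Zinvp_def)
  ultimately show "r \<in> Lp_ball p R"
    unfolding ball_L_def Lp_def by simp
qed

lemma proper_Lp:
  assumes "prime p"
  shows "proper_L (Zinvp p) (Lp p)"
  unfolding proper_L_def
proof
  fix R
  have "1 < real p"
    using prime_gt_1_nat[OF assms] by simp
  then obtain n where "R < real p ^ n"
    using real_arch_pow by blast
  also have "\<dots> \<le> real p ^ Suc n"
    using \<open>1 < real p\<close> by (intro power_increasing) auto
  finally have "Lp_ball p R \<subseteq> lattice_segment p n \<lfloor>R * real p ^ n\<rfloor>"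
    by (rule Lp_ball_subset_lattice_segment[OF assms])
  then show "finite (Lp_ball p R)"
    by (rule finite_subset) (simp add: lattice_segment_def)
qed

lemma card_Lp_ball_le:
  assumes "prime p" "0 \<le> R" "R < real p ^ Suc K"
  shows "real (card (Lp_ball p R)) \<le> 2 * R * real p ^ K + 1"
proof -
  have "card (Lp_ball p R) \<le> card (lattice_segment p K \<lfloor>R * real p ^ K\<rfloor>)"
    using Lp_ball_subset_lattice_segment[OF assms(1,3)]
    by (intro card_mono) (simp_all add: lattice_segment_def)
  then have "real (card (Lp_ball p R)) \<le> 2 * of_int \<lfloor>R * real p ^ K\<rfloor> + 1"
    using card_lattice_segment[of p "\<lfloor>R * real p ^ K\<rfloor>" K] assms(1,2) by (simp add: prime_gt_0_nat)
  then show ?thesis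
    by linarith
qed

lemma card_Lp_ball_ge:
  assumes "prime p" "real p ^ k \<le> R / 2"
  shows "real p ^ k * R / 2 \<le> real (card (Lp_ball p R))"
proof -
  have "0 \<le> real p ^ k"
    by simp
  moreover have "0 \<le> R"
    using assms(2) \<open>0 \<le> real p ^ k\<close> by linarith
  ultimately have "0 \<le> real p ^ k * R / 2"
    by simp
  have "card (lattice_segment p k \<lfloor>real p ^ k * R / 2\<rfloor>) \<le> card (Lp_ball p R)"
    using lattice_segment_subset_Lp_ball[OF assms] proper_Lp[OF assms(1)]
    by (intro card_mono) (simp_all add: proper_L_def)
  then have "2 * of_int \<lfloor>real p ^ k * R / 2\<rfloor> + 1 \<le> real (card (Lp_ball p R))"
    using card_lattice_segment[of p "\<lfloor>real p ^ k * R / 2\<rfloor>" k] assms(1) \<open>0 \<le> real p ^ k * R / 2\<close>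
    by (simp add: prime_gt_0_nat)
  moreover have "real p ^ k * R / 2 - 1 < of_int \<lfloor>real p ^ k * R / 2\<rfloor>"
    by (rule real_of_int_floor_gt_diff_one)
  moreover have "0 \<le> \<lfloor>real p ^ k * R / 2\<rfloor>"
    using \<open>0 \<le> real p ^ k * R / 2\<close> by simp
  ultimately show ?thesis
    by linarith
qed

lemma card_Lp_ball_ge_1:
  assumes "prime p" "0 \<le> R"
  shows "1 \<le> card (Lp_ball p R)"
proof -
  have "(0 :: rat) \<in> Zinvp p"
    unfolding Zinvp_def by (auto intro: exI[of _ 0])
  then have "0 \<in> Lp_ball p R"
    using assms(2) by (simp add: ball_L_def Lp_def padic_norm_def)
  then show ?thesis
    using proper_Lp[OF assms(1)] by (auto simp: proper_L_def Suc_le_eq card_gt_0_iff)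
qed

lemma ex_power_bracket:
  fixes b x :: real
  assumes "1 < b" "1 \<le> x"
  obtains K where "b ^ K \<le> x" "x < b ^ Suc K"
proof -
  define K where "K = nat \<lfloor>log b x\<rfloor>"
  have "\<lfloor>log b x\<rfloor> = int K"
    using assms by (simp add: K_def)
  then have "b powr real K \<le> x \<and> x < b powr (real K + 1)"
    using floor_log_eq_powr_iff[of x b "int K", unfolded of_int_of_nat_eq] assms by simp
  then show thesis
    using that assms by (auto simp: powr_realpow powr_add mult.commute)
qed

lemma card_Lp_ball_double_le:
  assumes "prime p" "1 \<le> R" "real p ^ (k + 2) \<le> 2 * R" "2 * R < real p ^ Suc (k + 2)"
  shows "real (card (Lp_ball p (2 * R))) \<le> 10 * real p ^ 2 * real (card (Lp_ball p R))"
proof -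
  have p: "2 \<le> real p"
    using prime_ge_2_nat[OF assms(1)] by simp
  then have "1 \<le> real p ^ (k + 2)"
    by (intro one_le_power) simp
  then have "1 \<le> R * real p ^ (k + 2)"
    using mult_mono[of 1 R 1 "real p ^ (k + 2)"] assms(2) by simp
  then have "real (card (Lp_ball p (2 * R))) \<le> 5 * (R * real p ^ (k + 2))"
    using card_Lp_ball_le[OF assms(1) _ assms(4)] assms(2) by simp
  also have "\<dots> = 10 * real p ^ 2 * (real p ^ k * R / 2)"
    by (simp add: power_add power2_eq_square)
  also have "\<dots> \<le> 10 * real p ^ 2 * real (card (Lp_ball p R))"
  proof -
    have "(2 :: real) ^ 2 \<le> real p ^ 2"
      using p by (rule power_mono) simp
    then have "real p ^ k * 4 \<le> real p ^ k * real p ^ 2"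
      by (intro mult_left_mono) simp_all
    also have "\<dots> \<le> 2 * R"
      using assms(3) by (simp only: power_add)
    finally have "real p ^ k * R / 2 \<le> real (card (Lp_ball p R))"
      using card_Lp_ball_ge[OF assms(1)] by simp
    then show ?thesis
      by (intro mult_left_mono) simp_all
  qed
  finally show ?thesis .
qed

lemma Lp_doubling:
  assumes "prime p" "1 \<le> R"
  shows "real (card (Lp_ball p (2 * R))) \<le> 4 * real p ^ 8 * real (card (Lp_ball p R))"
proof -
  have p: "2 \<le> real p"
    using prime_ge_2_nat[OF assms(1)] by simp
  have card_R: "1 \<le> real (card (Lp_ball p R))"
    using card_Lp_ball_ge_1[OF assms(1), of R] assms(2) by simp
  show ?thesis
  proof (cases "2 * R < real p ^ 2")
    case True
    have "real (card (Lp_ball p (2 * R))) \<le> 2 * (2 * R) * real p + 1"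
      using card_Lp_ball_le[of p "2 * R" 1] assms True by (simp add: power2_eq_square)
    also have "\<dots> \<le> 2 * real p ^ 2 * real p + 1"
      using True p by simp
    also have "\<dots> = 2 * real p ^ 3 + 1"
      by (simp add: power2_eq_square power3_eq_cube)
    also have "\<dots> \<le> 4 * real p ^ 8"
    proof -
      have "real p ^ 3 \<le> real p ^ 8" "1 \<le> real p ^ 8"
        using p by (intro power_increasing one_le_power; simp)+
      then show ?thesis
        by linarith
    qed
    finally show ?thesis
      using card_R mult_left_mono[OF card_R, of "4 * real p ^ 8"] by simp
  next
    case False
    obtain k where k: "real p ^ k \<le> 2 * R / real p ^ 2" "2 * R / real p ^ 2 < real p ^ Suc k"
      using ex_power_bracket[of "real p" "2 * R / real p ^ 2"] False p by auto
    then have "real p ^ (k + 2) \<le> 2 * R" "2 * R < real p ^ Suc (k + 2)"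
      using p by (simp_all add: power_add pos_le_divide_eq pos_divide_less_eq power2_eq_square ac_simps)
    then have "real (card (Lp_ball p (2 * R))) \<le> 10 * real p ^ 2 * real (card (Lp_ball p R))"
      by (rule card_Lp_ball_double_le[OF assms])
    also have "\<dots> \<le> 4 * real p ^ 8 * real (card (Lp_ball p R))"
    proof -
      have "(2 :: real) ^ 6 \<le> real p ^ 6"
        using p by (rule power_mono) simp
      then have "real p ^ 2 * 64 \<le> real p ^ 2 * real p ^ 6"
        by (intro mult_left_mono) simp_all
      then have "10 * real p ^ 2 \<le> 4 * (real p ^ 2 * real p ^ 6)"
        using zero_le_power2[of "real p"] by linarith
      then show ?thesis
        by (intro mult_right_mono) (simp_all flip: power_add)
    qed
    finally show ?thesis .
  qed
qed

theorem lemma3p6: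
  fixes p :: nat
  assumes "prime p"
  shows "bounded_dilation (Zinvp p) (Lp p) (real p)
       \<and> bounded_doubling (Zinvp p) (Lp p) (4 * real p ^ 8)"
proof
  show doubling: "bounded_doubling (Zinvp p) (Lp p) (4 * real p ^ 8)"
    unfolding bounded_doubling_def using proper_Lp Lp_doubling assms by blast
  then show "bounded_dilation (Zinvp p) (Lp p) (real p)"
    by (rule bounded_doubling_imp_bounded_dilation) simp
qed

end
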